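(* Let $\alpha\le 1/2$ and $\lambda\in\mathbb R$. For each $N$ let $X^N$ be the SIS epidemic on $\{0,1,\dots,N\}$ with transmissivity parameter $\beta_N=1+\lambda/N^{\alpha}$, and let $Y^N_t=X^N(N^{\alpha}t)/N^{\alpha}$, a Markov process on $E_N=\{k/N^{\alpha}: k=0,1,\dots,N\}$. For $f\in C_c^\infty[0,\infty)$ and $y\in E_N$ define $$\mathcal G^N f(y)=\lim_{h\to0}\frac{E^N_y\big[f(Y^N_h)-f(y)\big]}{h},$$ where $E^N_y$ denotes expectation with $Y^N_0=y$, and define $$\mathcal G f(y)=\lambda y\, f'(y)+y\,f''(y)\quad\text{if }\alpha<1/2,\qquad \mathcal G f(y)=(\lambda y-y^2)\, f'(y)+y\,f''(y)\quad\text{if }\alpha=1/2.$$ Then for every $f\in C_c^\infty[0,\infty)$, $$\lim_{N\to\infty}\ \sup_{y\in E_N}\big|\mathcal G^N f(y)-\mathcal G f(y)\big|=0.$$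
   Context: The SIS epidemic with population size $N$ and transmissivity parameter $\beta>0$ is the continuous-time birth-death Markov chain on $\{0,1,\dots,N\}$ which jumps from $x$ to $x+1$ at rate $\beta x(1-x/N)$ and from $x$ to $x-1$ at rate $x$. $C_c^\infty[0,\infty)$ denotes smooth functions on $[0,\infty)$ with compact support. *)

theory Defs
  imports "HOL-Analysis.Analysis"
begin

definition sis_Q :: "nat \<Rightarrow> real \<Rightarrow> nat \<Rightarrow> nat \<Rightarrow> real" where
  "sis_Q N \<beta> x z =
     (if z = Suc x \<and> Suc x \<le> N then \<beta> * real x * (1 - real x / real N)
      else if Suc z = x then real x
      else if z = x then - (\<beta> * real x * (1 - real x / real N) + real x)
      else 0)"

fun sis_Qpow :: "nat \<Rightarrow> real \<Rightarrow> nat \<Rightarrow> nat \<Rightarrow> nat \<Rightarrow> real" where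
  "sis_Qpow N \<beta> 0 x z = (if x = z then 1 else 0)"
| "sis_Qpow N \<beta> (Suc k) x z = (\<Sum>w\<in>{0..N}. sis_Q N \<beta> x w * sis_Qpow N \<beta> k w z)"

text \<open>Transition probabilities P_t(x,z) = exp(tQ)(x,z) of the continuous-time chain.\<close>
definition sis_trans :: "nat \<Rightarrow> real \<Rightarrow> real \<Rightarrow> nat \<Rightarrow> nat \<Rightarrow> real" where
  "sis_trans N \<beta> t x z = (\<Sum>k. t ^ k / fact k * sis_Qpow N \<beta> k x z)"

definition beta_N :: "real \<Rightarrow> real \<Rightarrow> nat \<Rightarrow> real" where
  "beta_N \<alpha> lam N = 1 + lam / real N powr \<alpha>"

text \<open>E^N_y[f(Y^N_h)] for Y^N_t = X^N(N^alpha t)/N^alpha, started at y = x/N^alpha.\<close>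
definition Y_expect :: "real \<Rightarrow> real \<Rightarrow> nat \<Rightarrow> (real \<Rightarrow> real) \<Rightarrow> nat \<Rightarrow> real \<Rightarrow> real" where
  "Y_expect \<alpha> lam N f x h =
     (\<Sum>z\<in>{0..N}. sis_trans N (beta_N \<alpha> lam N) (real N powr \<alpha> * h) x z
                    * f (real z / real N powr \<alpha>))"

definition gen_N :: "real \<Rightarrow> real \<Rightarrow> nat \<Rightarrow> (real \<Rightarrow> real) \<Rightarrow> nat \<Rightarrow> real" where
  "gen_N \<alpha> lam N f x =
     Lim (at_right 0) (\<lambda>h. (Y_expect \<alpha> lam N f x h - f (real x / real N powr \<alpha>)) / h)"

text \<open>f in C_c^infinity[0,infinity): F n is the n-th derivative of f on [0,infinity)
(one-sided at 0), and f vanishes outside a bounded set.\<close>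
definition smooth_cc :: "(nat \<Rightarrow> real \<Rightarrow> real) \<Rightarrow> bool" where
  "smooth_cc F \<longleftrightarrow>
     (\<forall>n x. x \<ge> 0 \<longrightarrow> (F n has_real_derivative F (Suc n) x) (at x within {0..}))
     \<and> (\<exists>R. \<forall>x. x \<ge> 0 \<and> x > R \<longrightarrow> F 0 x = 0)"

definition gen_lim :: "real \<Rightarrow> real \<Rightarrow> (nat \<Rightarrow> real \<Rightarrow> real) \<Rightarrow> real \<Rightarrow> real" where
  "gen_lim \<alpha> lam F y =
     (if \<alpha> < 1/2 then lam * y * F 1 y + y * F 2 y
      else (lam * y - y^2) * F 1 y + y * F 2 y)"

end

theory Submission
  imports Defs
begin

(* The generator of the scaled chain acts on f as a second difference quotient with mesh
   h = N^-alpha: at y = k h,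
     G^N f(y) = ((1 + lam h) y (1 - p y h) (f(y+h) - f(y)) + y (f(y-h) - f(y))) / h^2,
   where p = N^(2 alpha) / N; this is read off from the fact that exp(tQ) has derivative Q at 0.
   Taylor expansion to third order turns the right-hand side into
   lam y f'(y) + y f''(y) - p y^2 f'(y) up to an error O(h + |p - gamma|), uniformly in y because
   f is supported in a bounded set. Finally p tends to 0 if alpha < 1/2 and equals 1 if alpha = 1/2,
   which is the coefficient gamma of the quadratic drift in the limit generator. *)

lemma exponential_powser_has_derivative_at_0:
  fixes a :: "nat \<Rightarrow> real"
  assumes "\<And>k. \<bar>a k\<bar> \<le> M ^ k / fact k"
  shows "((\<lambda>t. \<Sum>k. a k * t ^ k) has_field_derivative a 1) (at 0)"
proof -
  have "summable (\<lambda>k. a k * 1 ^ k)"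
    by (rule summable_comparison_test'[OF summable_exp[of M]])
       (use assms in \<open>simp add: divide_inverse mult.commute\<close>)
  from termdiffs_strong[OF this, of 0] show ?thesis
    by (simp add: diffs_def)
qed

lemma Lim_difference_quotient_at_right_0:
  fixes g :: "real \<Rightarrow> real"
  assumes "(g has_field_derivative D) (at 0)"
  shows "Lim (at_right 0) (\<lambda>h. (g h - g 0) / h) = D"
proof (rule tendsto_Lim)
  show "((\<lambda>h. (g h - g 0) / h) \<longlongrightarrow> D) (at_right 0)"
    using assms unfolding DERIV_def by (auto intro: tendsto_mono[OF at_le])
qed simp

lemma second_difference_generator_error:
  fixes h y Y p \<gamma> lam f0 fp fm f1 f2 B1 B2 B3 :: real
  assumes h: "0 < h" and y: "0 \<le> y" "y \<le> Y" and p: "0 \<le> p" "p \<le> 1"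
    and f1: "\<bar>f1\<bar> \<le> B1"
    and D: "\<bar>(fp - f0) / h\<bar> \<le> B1"
    and E1: "\<bar>(fp - f0) / h - f1\<bar> \<le> B2 * h"
    and E2: "\<bar>(fp + fm - 2 * f0) / h\<^sup>2 - f2\<bar> \<le> B3 * h"
  shows "\<bar>((1 + lam * h) * y * (1 - p * y * h) * (fp - f0) + y * (fm - f0)) / h\<^sup>2
            - (lam * y * f1 + y * f2 - \<gamma> * y\<^sup>2 * f1)\<bar>
         \<le> (Y * B3 + \<bar>lam\<bar> * Y * B2 + Y\<^sup>2 * B2 + Y\<^sup>2 * B1 + \<bar>lam\<bar> * Y\<^sup>2 * B1) * (h + \<bar>p - \<gamma>\<bar>)"
proof -
  define D where "D = (fp - f0) / h"
  define E1 where "E1 = D - f1"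
  define E2 where "E2 = (fp + fm - 2 * f0) / h\<^sup>2 - f2"
  have B: "0 \<le> B1" "0 \<le> B2" "0 \<le> B3"
  proof -
    show "0 \<le> B1"
      using f1 abs_ge_zero[of f1] by linarith
    have "0 \<le> B2 * h" "0 \<le> B3 * h"
      using E1 E2 by (meson abs_ge_zero order_trans)+
    then show "0 \<le> B2" "0 \<le> B3"
      using h by (simp_all add: zero_le_mult_iff)
  qed
  have y2: "y\<^sup>2 \<le> Y\<^sup>2"
    using y by (simp add: power_mono)
  have py2: "\<bar>p * y\<^sup>2\<bar> \<le> Y\<^sup>2"
    using p y2 mult_mono[OF p(2) y2] by (simp add: abs_mult)
  have "((1 + lam * h) * y * (1 - p * y * h) * (fp - f0) + y * (fm - f0)) / h\<^sup>2
          - (lam * y * f1 + y * f2 - \<gamma> * y\<^sup>2 * f1)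
      = y * E2 + lam * y * E1 - p * y\<^sup>2 * E1 - (p - \<gamma>) * y\<^sup>2 * f1 - lam * p * y\<^sup>2 * h * D"
    unfolding E1_def E2_def D_def using h by (simp add: field_simps power2_eq_square)
  moreover have "\<bar>y * E2\<bar> \<le> Y * B3 * h"
    using y E2 unfolding E2_def abs_mult mult.assoc by (intro mult_mono) auto
  moreover have "\<bar>lam * y * E1\<bar> \<le> \<bar>lam\<bar> * Y * B2 * h"
    using y E1 unfolding E1_def D_def abs_mult mult.assoc by (intro mult_mono mult_left_mono) auto
  moreover have "\<bar>p * y\<^sup>2 * E1\<bar> \<le> Y\<^sup>2 * B2 * h"
    using py2 E1 unfolding E1_def D_def abs_mult[of "p * y\<^sup>2"] mult.assoc[of "Y\<^sup>2"]
    by (intro mult_mono) auto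
  moreover have "\<bar>(p - \<gamma>) * y\<^sup>2 * f1\<bar> \<le> Y\<^sup>2 * B1 * \<bar>p - \<gamma>\<bar>"
    using y2 f1 by (simp add: abs_mult mult_mono' mult_ac)
  moreover have "\<bar>lam * p * y\<^sup>2 * h * D\<bar> \<le> \<bar>lam\<bar> * Y\<^sup>2 * B1 * h"
  proof -
    have "\<bar>p * y\<^sup>2\<bar> * \<bar>D\<bar> \<le> Y\<^sup>2 * B1"
      using py2 D unfolding D_def by (intro mult_mono) auto
    from mult_left_mono[OF this, of "\<bar>lam\<bar> * h"] show ?thesis
      using h by (simp add: abs_mult mult_ac)
  qed
  moreover have "0 \<le> Y" "0 \<le> \<bar>p - \<gamma>\<bar>"
    using y by auto
  ultimately show ?thesis
    using B h
    by (simp add: algebra_simps) (smt (verit) mult_nonneg_nonneg zero_le_power2)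
qed

lemma sis_Qpow_abs_le:
  assumes "x \<le> N"
  shows "\<bar>sis_Qpow N \<beta> k x z\<bar> \<le> (\<Sum>v\<in>{0..N}. \<Sum>w\<in>{0..N}. \<bar>sis_Q N \<beta> v w\<bar>) ^ k"
  using assms
proof (induction k arbitrary: x)
  case 0
  then show ?case by simp
next
  case (Suc k)
  define M where "M = (\<Sum>v\<in>{0..N}. \<Sum>w\<in>{0..N}. \<bar>sis_Q N \<beta> v w\<bar>)"
  have row: "(\<Sum>w\<in>{0..N}. \<bar>sis_Q N \<beta> x w\<bar>) \<le> M"
    unfolding M_def using Suc.prems
    by (intro member_le_sum[where f="\<lambda>v. \<Sum>w\<in>{0..N}. \<bar>sis_Q N \<beta> v w\<bar>", simplified])
       (auto intro: sum_nonneg)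
  have "\<bar>sis_Qpow N \<beta> (Suc k) x z\<bar> \<le> (\<Sum>w\<in>{0..N}. \<bar>sis_Q N \<beta> x w\<bar> * M ^ k)"
    unfolding sis_Qpow.simps M_def
    by (rule order_trans[OF sum_abs]) (auto intro!: sum_mono mult_left_mono Suc.IH simp: abs_mult)
  also have "\<dots> = (\<Sum>w\<in>{0..N}. \<bar>sis_Q N \<beta> x w\<bar>) * M ^ k"
    by (simp add: sum_distrib_right)
  also have "\<dots> \<le> M * M ^ k"
    using row by (rule mult_right_mono) (auto simp: M_def intro!: zero_le_power sum_nonneg)
  finally show ?case by (simp add: M_def)
qed

lemma sis_trans_0: "sis_trans N \<beta> 0 x z = (if x = z then 1 else 0)"
  using powser_zero[of "\<lambda>k. sis_Qpow N \<beta> k x z / fact k"]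
  by (simp add: sis_trans_def mult.commute)

lemma sis_trans_has_derivative_at_0:
  assumes "x \<le> N" "z \<le> N"
  shows "((\<lambda>t. sis_trans N \<beta> t x z) has_field_derivative sis_Q N \<beta> x z) (at 0)"
proof -
  let ?M = "\<Sum>v\<in>{0..N}. \<Sum>w\<in>{0..N}. \<bar>sis_Q N \<beta> v w\<bar>"
  have "((\<lambda>t. \<Sum>k. sis_Qpow N \<beta> k x z / fact k * t ^ k) has_field_derivative
          sis_Qpow N \<beta> 1 x z / fact 1) (at 0)"
    by (rule exponential_powser_has_derivative_at_0[where M="?M"])
       (use sis_Qpow_abs_le[OF assms(1)] in \<open>simp add: divide_right_mono\<close>)
  then show ?thesis
    using assms(2) by (simp add: sis_trans_def mult.commute if_distrib cong: if_cong)
qed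

lemma gen_N_eq_sum:
  assumes "x \<le> N"
  shows "gen_N \<alpha> lam N f x = real N powr \<alpha> *
     (\<Sum>z\<in>{0..N}. sis_Q N (beta_N \<alpha> lam N) x z * f (real z / real N powr \<alpha>))"
proof -
  define s where "s = real N powr \<alpha>"
  define \<beta> where "\<beta> = beta_N \<alpha> lam N"
  have "(Y_expect \<alpha> lam N f x has_field_derivative
      (\<Sum>z\<in>{0..N}. sis_Q N \<beta> x z * s * f (real z / s))) (at 0)"
    unfolding Y_expect_def s_def[symmetric] \<beta>_def[symmetric]
  proof (intro DERIV_sum DERIV_cmult_right)
    fix z assume "z \<in> {0..N}"
    then have "((\<lambda>t. sis_trans N \<beta> t x z) has_field_derivative sis_Q N \<beta> x z) (at (s * 0))"
      using sis_trans_has_derivative_at_0[OF assms] by simp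
    from DERIV_chain2[where g="\<lambda>h. s * h", OF this]
    show "((\<lambda>h. sis_trans N \<beta> (s * h) x z) has_field_derivative sis_Q N \<beta> x z * s) (at 0)"
      by (auto intro!: derivative_eq_intros)
  qed
  from Lim_difference_quotient_at_right_0[OF this]
  have "gen_N \<alpha> lam N f x = (\<Sum>z\<in>{0..N}. sis_Q N \<beta> x z * s * f (real z / s))"
    using assms unfolding gen_N_def
    by (simp add: Y_expect_def sis_trans_0 s_def if_distrib[where f="\<lambda>a. a * _"] cong: if_cong)
  then show ?thesis
    unfolding s_def \<beta>_def by (simp add: sum_distrib_left mult_ac)
qed

lemma sis_Q_sum_eq:
  assumes "x \<le> N" "0 < N"
  shows "(\<Sum>z\<in>{0..N}. sis_Q N \<beta> x z * g z) =
     \<beta> * real x * (1 - real x / real N) * (g (Suc x) - g x) + real x * (g (x - 1) - g x)"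
proof -
  define b where "b = \<beta> * real x * (1 - real x / real N)"
  have b_top: "x = N \<Longrightarrow> b = 0"
    using assms by (simp add: b_def)
  have "(\<Sum>z\<in>{0..N}. sis_Q N \<beta> x z * g z) =
     (\<Sum>z\<in>{0..N}. (if z = Suc x then b * g (Suc x) else 0)
        + (if z = x - 1 \<and> 0 < x then real x * g (x - 1) else 0)
        + (if z = x then - (b + real x) * g x else 0))"
    using b_top by (intro sum.cong) (auto simp: sis_Q_def b_def)
  also have "\<dots> = (if Suc x \<le> N then b * g (Suc x) else 0)
      + (if 0 < x then real x * g (x - 1) else 0) - (b + real x) * g x"
    using assms by (simp add: sum.distrib sum.delta' algebra_simps)
  also have "\<dots> = b * (g (Suc x) - g x) + real x * (g (x - 1) - g x)"
    using b_top assms by (auto simp: algebra_simps)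
  finally show ?thesis
    unfolding b_def .
qed

lemma gen_N_eq_difference_quotient:
  fixes \<alpha> lam :: real and f :: "real \<Rightarrow> real"
  assumes "1 \<le> N" "k \<le> N"
  defines "h \<equiv> 1 / real N powr \<alpha>" and "p \<equiv> (real N powr \<alpha>)\<^sup>2 / real N"
    and "y \<equiv> real k / real N powr \<alpha>"
  shows "gen_N \<alpha> lam N f k =
    ((1 + lam * h) * y * (1 - p * y * h) * (f (y + h) - f y) + y * (f (y - h) - f y)) / h\<^sup>2"
proof -
  define s where "s = real N powr \<alpha>"
  have s: "s > 0" and h: "h = 1 / s"
    using assms(1) by (simp_all add: s_def h_def)
  have "gen_N \<alpha> lam N f k = s * ((1 + lam / s) * real k * (1 - real k / real N)
      * (f ((real k + 1) / s) - f (real k / s)) + real k * (f (real (k - 1) / s) - f (real k / s)))"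
    using gen_N_eq_sum[OF assms(2)] sis_Q_sum_eq[OF assms(2)] assms(1)
    by (simp add: s_def beta_N_def add.commute)
  also have "\<dots> = s * ((1 + lam / s) * real k * (1 - real k / real N)
      * (f ((real k + 1) / s) - f (real k / s)) + real k * (f ((real k - 1) / s) - f (real k / s)))"
    \<comment> \<open>for k = 0 the truncated k - 1 is harmless, being multiplied by k\<close>
    by (cases k) auto
  also have "\<dots> = ((1 + lam * h) * y * (1 - p * y * h) * (f (y + h) - f y) + y * (f (y - h) - f y)) / h\<^sup>2"
    using s assms(1) unfolding y_def p_def h s_def[symmetric]
    by (simp add: field_simps power2_eq_square)
  finally show ?thesis .
qed

lemma smooth_cc_vanishes:
  assumes "smooth_cc F"
  obtains R where "\<And>n x. x > R \<Longrightarrow> F n x = 0"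
proof -
  from assms obtain R0 where R0: "\<And>x. x \<ge> 0 \<Longrightarrow> x > R0 \<Longrightarrow> F 0 x = 0"
    unfolding smooth_cc_def by blast
  define R where "R = max R0 0"
  have "\<forall>x > R. F n x = 0" for n
  proof (induction n)
    case 0
    then show ?case using R0 by (auto simp: R_def)
  next
    case (Suc n)
    show ?case
    proof (intro allI impI)
      fix x assume x: "x > R"
      then have "x \<ge> 0"
        by (simp add: R_def)
      then have "(F n has_field_derivative F (Suc n) x) (at x within {0..})"
        using assms unfolding smooth_cc_def by blast
      moreover have "at x within {0..} = at x"
        using x by (intro at_within_interior) (auto simp: R_def)
      ultimately have "(F n has_field_derivative F (Suc n) x) (at x)"
        by simp
      then have "((\<lambda>_. 0) has_field_derivative F (Suc n) x) (at x)"
        by (rule has_field_derivative_transform_within_open[where S="{R<..}"]) (use x Suc in auto)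
      then show "F (Suc n) x = 0"
        using DERIV_unique DERIV_const by blast
    qed
  qed
  then show ?thesis
    using that[of R] by (auto simp: R_def)
qed

lemma smooth_cc_bounded:
  assumes "smooth_cc F"
  obtains B where "\<And>x. x \<ge> 0 \<Longrightarrow> \<bar>F n x\<bar> \<le> B"
proof -
  obtain R where R: "\<And>n x. x > R \<Longrightarrow> F n x = 0"
    using smooth_cc_vanishes[OF assms] by blast
  have "continuous_on {0..} (F n)"
    unfolding continuous_on_eq_continuous_within
  proof
    fix x :: real assume "x \<in> {0..}"
    then have "(F n has_field_derivative F (Suc n) x) (at x within {0..})"
      using assms unfolding smooth_cc_def by auto
    then show "continuous (at x within {0..}) (F n)"
      by (rule DERIV_continuous)
  qed
  then have "bounded (F n ` {0..R})"
    by (intro compact_imp_bounded compact_continuous_image[OF continuous_on_subset]) auto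
  then obtain B where B: "\<And>x. x \<in> {0..R} \<Longrightarrow> \<bar>F n x\<bar> \<le> B"
    unfolding bounded_iff real_norm_def by blast
  show ?thesis
  proof (rule that)
    fix x :: real
    assume "x \<ge> 0"
    then show "\<bar>F n x\<bar> \<le> max B 0"
      using B[of x] R[of x n] by (cases "x \<le> R") auto
  qed
qed

lemma smooth_cc_taylor:
  assumes "smooth_cc F" "\<And>x. x \<ge> 0 \<Longrightarrow> \<bar>F (Suc n) x\<bar> \<le> B" "w \<ge> 0" "z \<ge> 0"
  shows "\<bar>F 0 z - (\<Sum>i\<le>n. F i w * (z - w) ^ i / fact i)\<bar> \<le> B * \<bar>z - w\<bar> ^ Suc n / fact n"
proof -
  have "norm (F 0 z - (\<Sum>i\<le>n. F i w * (z - w) ^ i / fact i)) \<le> B * norm (z - w) ^ Suc n / fact n"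
    by (rule field_Taylor[where S="{0..}"]) (use assms in \<open>auto simp: smooth_cc_def\<close>)
  then show ?thesis
    by simp
qed

lemma smooth_cc_difference_quotients:
  assumes F: "smooth_cc F"
    and B1: "\<And>x. x \<ge> 0 \<Longrightarrow> \<bar>F 1 x\<bar> \<le> B1"
    and B2: "\<And>x. x \<ge> 0 \<Longrightarrow> \<bar>F 2 x\<bar> \<le> B2"
    and B3: "\<And>x. x \<ge> 0 \<Longrightarrow> \<bar>F 3 x\<bar> \<le> B3"
    and h: "0 < h" "h \<le> y"
  shows "\<bar>(F 0 (y + h) - F 0 y) / h\<bar> \<le> B1"
    and "\<bar>(F 0 (y + h) - F 0 y) / h - F 1 y\<bar> \<le> B2 * h"
    and "\<bar>(F 0 (y + h) + F 0 (y - h) - 2 * F 0 y) / h\<^sup>2 - F 2 y\<bar> \<le> B3 * h"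
proof -
  have y: "y \<ge> 0" "y - h \<ge> 0" "y + h \<ge> 0"
    using h by auto
  have "\<bar>F 0 (y + h) - F 0 y\<bar> \<le> B1 * h"
    using smooth_cc_taylor[of F 0 B1 y "y + h"] F B1 y h by simp
  then show "\<bar>(F 0 (y + h) - F 0 y) / h\<bar> \<le> B1"
    using h by (simp add: abs_divide divide_le_eq)
  have "\<bar>F 0 (y + h) - F 0 y - F 1 y * h\<bar> \<le> B2 * h\<^sup>2"
    using smooth_cc_taylor[of F 1 B2 y "y + h"] F B2 y h
    by (simp add: numeral_2_eq_2 algebra_simps)
  moreover have "(F 0 (y + h) - F 0 y) / h - F 1 y = (F 0 (y + h) - F 0 y - F 1 y * h) / h"
    using h by (simp add: field_simps)
  ultimately show "\<bar>(F 0 (y + h) - F 0 y) / h - F 1 y\<bar> \<le> B2 * h"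
    using h by (simp add: abs_divide divide_le_eq power2_eq_square mult_ac)
  have "\<bar>F 0 (y + h) - (F 0 y + F 1 y * h + F 2 y * h\<^sup>2 / 2)\<bar> \<le> B3 * h ^ 3 / 2"
    using smooth_cc_taylor[of F 2 B3 y "y + h"] F B3 y h
    by (simp add: numeral_3_eq_3 numeral_2_eq_2)
  moreover have "\<bar>F 0 (y - h) - (F 0 y - F 1 y * h + F 2 y * h\<^sup>2 / 2)\<bar> \<le> B3 * h ^ 3 / 2"
    using smooth_cc_taylor[of F 2 B3 y "y - h"] F B3 y h
    by (simp add: numeral_3_eq_3 numeral_2_eq_2)
  ultimately have "\<bar>F 0 (y + h) + F 0 (y - h) - 2 * F 0 y - F 2 y * h\<^sup>2\<bar> \<le> B3 * h ^ 3"
    by (smt (verit, best) field_sum_of_halves)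
  moreover have "(F 0 (y + h) + F 0 (y - h) - 2 * F 0 y) / h\<^sup>2 - F 2 y
      = (F 0 (y + h) + F 0 (y - h) - 2 * F 0 y - F 2 y * h\<^sup>2) / h\<^sup>2"
    using h by (simp add: field_simps)
  ultimately show "\<bar>(F 0 (y + h) + F 0 (y - h) - 2 * F 0 y) / h\<^sup>2 - F 2 y\<bar> \<le> B3 * h"
    using h by (simp add: abs_divide divide_le_eq power2_eq_square power3_eq_cube mult_ac)
qed

lemma gen_lim_eq:
  "gen_lim \<alpha> lam F y = lam * y * F 1 y + y * F 2 y - (if \<alpha> < 1/2 then 0 else 1) * y\<^sup>2 * F 1 y"
  unfolding gen_lim_def by (simp add: algebra_simps power2_eq_square)

lemma gen_N_error_le:
  fixes \<alpha> lam :: real and F :: "nat \<Rightarrow> real \<Rightarrow> real"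
  assumes \<alpha>: "0 < \<alpha>" "\<alpha> \<le> 1/2" and F: "smooth_cc F"
    and R: "\<And>n x. x > R \<Longrightarrow> F n x = 0"
    and B1: "\<And>x. x \<ge> 0 \<Longrightarrow> \<bar>F 1 x\<bar> \<le> B1"
    and B2: "\<And>x. x \<ge> 0 \<Longrightarrow> \<bar>F 2 x\<bar> \<le> B2"
    and B3: "\<And>x. x \<ge> 0 \<Longrightarrow> \<bar>F 3 x\<bar> \<le> B3"
    and N: "1 \<le> N" and k: "k \<le> N"
  defines "Y \<equiv> max R 0 + 1"
  shows "\<bar>gen_N \<alpha> lam N (F 0) k - gen_lim \<alpha> lam F (real k / real N powr \<alpha>)\<bar>
     \<le> (Y * B3 + \<bar>lam\<bar> * Y * B2 + Y\<^sup>2 * B2 + Y\<^sup>2 * B1 + \<bar>lam\<bar> * Y\<^sup>2 * B1)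
        * (1 / real N powr \<alpha> + \<bar>(real N powr \<alpha>)\<^sup>2 / real N - (if \<alpha> < 1/2 then 0 else 1)\<bar>)"
proof -
  define h where "h = 1 / real N powr \<alpha>"
  define p where "p = (real N powr \<alpha>)\<^sup>2 / real N"
  define y where "y = real k / real N powr \<alpha>"
  define \<gamma> :: real where "\<gamma> = (if \<alpha> < 1/2 then 0 else 1)"
  define C where "C = Y * B3 + \<bar>lam\<bar> * Y * B2 + Y\<^sup>2 * B2 + Y\<^sup>2 * B1 + \<bar>lam\<bar> * Y\<^sup>2 * B1"
  have s: "1 \<le> real N powr \<alpha>"
    using N \<alpha> by (intro ge_one_powr_ge_zero) auto
  then have h: "0 < h" "h \<le> 1"
    using N by (auto simp: h_def divide_le_eq)
  have p: "0 \<le> p" "p \<le> 1"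
  proof -
    have "(real N powr \<alpha>)\<^sup>2 = real N powr (2 * \<alpha>)"
      using N by (simp add: powr_power)
    also have "\<dots> \<le> real N powr 1"
      using N \<alpha> by (intro powr_mono) auto
    finally show "p \<le> 1"
      using N by (simp add: p_def)
  qed (simp add: p_def)
  have "0 \<le> B1" "0 \<le> B2" "0 \<le> B3"
    using B1[of 0] B2[of 0] B3[of 0] by auto
  then have rhs_nonneg: "0 \<le> C * (h + \<bar>p - \<gamma>\<bar>)"
    using h by (simp add: C_def Y_def)
  have gN: "gen_N \<alpha> lam N (F 0) k =
      ((1 + lam * h) * y * (1 - p * y * h) * (F 0 (y + h) - F 0 y) + y * (F 0 (y - h) - F 0 y)) / h\<^sup>2"
    using gen_N_eq_difference_quotient[OF N k] unfolding h_def p_def y_def .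
  have gl: "gen_lim \<alpha> lam F y = lam * y * F 1 y + y * F 2 y - \<gamma> * y\<^sup>2 * F 1 y"
    unfolding gen_lim_eq \<gamma>_def ..
  have "\<bar>gen_N \<alpha> lam N (F 0) k - gen_lim \<alpha> lam F y\<bar> \<le> C * (h + \<bar>p - \<gamma>\<bar>)"
  proof (cases "k = 0 \<or> y > Y")
    case True
    then have "y = 0 \<or> (y - h > R \<and> y > R \<and> y + h > R)"
      using h by (auto simp: y_def Y_def)
    then have "gen_N \<alpha> lam N (F 0) k = 0 \<and> gen_lim \<alpha> lam F y = 0"
      using gN gl R by auto
    then show ?thesis
      using rhs_nonneg by simp
  next
    case False
    then have y: "h \<le> y" "y \<le> Y"
      using s by (auto simp: h_def y_def divide_right_mono)
    show ?thesis
      unfolding gN gl C_def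
      by (rule second_difference_generator_error[OF h(1) _ y(2) p B1
            smooth_cc_difference_quotients[OF F B1 B2 B3 h(1) y(1)]])
         (use h y in auto)
  qed
  then show ?thesis
    unfolding y_def h_def p_def \<gamma>_def C_def .
qed

lemma powr_square_over_tendsto:
  fixes \<alpha> :: real
  assumes "0 < \<alpha>" "\<alpha> \<le> 1/2"
  shows "(\<lambda>N. (real N powr \<alpha>)\<^sup>2 / real N) \<longlonglongrightarrow> (if \<alpha> < 1/2 then 0 else 1)"
proof -
  have "\<forall>\<^sub>F N in sequentially. real N powr (2 * \<alpha> - 1) = (real N powr \<alpha>)\<^sup>2 / real N"
    using eventually_gt_at_top[of 0]
    by eventually_elim (simp add: powr_power powr_diff mult.commute)
  moreover have "(\<lambda>N. real N powr (2 * \<alpha> - 1)) \<longlonglongrightarrow> (if \<alpha> < 1/2 then 0 else 1)"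
  proof (cases "\<alpha> < 1/2")
    case True
    then show ?thesis
      by (simp add: tendsto_neg_powr filterlim_real_sequentially)
  next
    case False
    then have "2 * \<alpha> - 1 = 0"
      using assms by simp
    have "\<forall>\<^sub>F N in sequentially. real N powr (2 * \<alpha> - 1) = 1"
      using eventually_gt_at_top[of 0] by (rule eventually_mono) (simp add: \<open>2 * \<alpha> - 1 = 0\<close>)
    then show ?thesis
      using False by (simp add: tendsto_eventually)
  qed
  ultimately show ?thesis
    by (rule Lim_transform_eventually[rotated])
qed

lemma gen_N_sup_error_le:
  fixes \<alpha> lam :: real and F :: "nat \<Rightarrow> real \<Rightarrow> real"
  assumes "0 < \<alpha>" "\<alpha> \<le> 1/2" "smooth_cc F"
  obtains C where "\<And>N. 1 \<le> N \<Longrightarrow>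
    (SUP k\<in>{0..N}. \<bar>gen_N \<alpha> lam N (F 0) k - gen_lim \<alpha> lam F (real k / real N powr \<alpha>)\<bar>)
      \<le> C * (1 / real N powr \<alpha> + \<bar>(real N powr \<alpha>)\<^sup>2 / real N - (if \<alpha> < 1/2 then 0 else 1)\<bar>)"
proof -
  obtain R where R: "\<And>n x. x > R \<Longrightarrow> F n x = 0"
    using smooth_cc_vanishes[OF assms(3)] by blast
  obtain B1 B2 B3 where B: "\<And>x. x \<ge> 0 \<Longrightarrow> \<bar>F 1 x\<bar> \<le> B1"
      "\<And>x. x \<ge> 0 \<Longrightarrow> \<bar>F 2 x\<bar> \<le> B2" "\<And>x. x \<ge> 0 \<Longrightarrow> \<bar>F 3 x\<bar> \<le> B3"
    by (metis smooth_cc_bounded[OF assms(3)])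
  define Y where "Y = max R 0 + 1"
  show ?thesis
  proof (rule that[of "Y * B3 + \<bar>lam\<bar> * Y * B2 + Y\<^sup>2 * B2 + Y\<^sup>2 * B1 + \<bar>lam\<bar> * Y\<^sup>2 * B1"],
      rule cSUP_least)
    fix N k :: nat
    assume "1 \<le> N" "k \<in> {0..N}"
    then show "\<bar>gen_N \<alpha> lam N (F 0) k - gen_lim \<alpha> lam F (real k / real N powr \<alpha>)\<bar>
      \<le> (Y * B3 + \<bar>lam\<bar> * Y * B2 + Y\<^sup>2 * B2 + Y\<^sup>2 * B1 + \<bar>lam\<bar> * Y\<^sup>2 * B1)
        * (1 / real N powr \<alpha> + \<bar>(real N powr \<alpha>)\<^sup>2 / real N - (if \<alpha> < 1/2 then 0 else 1)\<bar>)"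
      unfolding Y_def by (intro gen_N_error_le[OF assms R B]) auto
  qed simp
qed

theorem lemma1:
  fixes \<alpha> lam :: real and F :: "nat \<Rightarrow> real \<Rightarrow> real"
  assumes "0 < \<alpha>" and "\<alpha> \<le> 1/2"
    and "smooth_cc F"
  shows "(\<lambda>N. SUP k\<in>{0..N}.
            \<bar>gen_N \<alpha> lam N (F 0) k - gen_lim \<alpha> lam F (real k / real N powr \<alpha>)\<bar>)
         \<longlonglongrightarrow> 0"
proof -
  let ?\<gamma> = "if \<alpha> < 1/2 then 0 else 1 :: real"
  obtain C where sup_le: "\<And>N. 1 \<le> N \<Longrightarrow>
    (SUP k\<in>{0..N}. \<bar>gen_N \<alpha> lam N (F 0) k - gen_lim \<alpha> lam F (real k / real N powr \<alpha>)\<bar>)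
      \<le> C * (1 / real N powr \<alpha> + \<bar>(real N powr \<alpha>)\<^sup>2 / real N - ?\<gamma>\<bar>)"
    using gen_N_sup_error_le[OF assms] by blast
  have "(\<lambda>N. 1 / real N powr \<alpha>) \<longlonglongrightarrow> 0"
    using assms(1) by (simp add: powr_minus_divide[symmetric] tendsto_neg_powr filterlim_real_sequentially)
  moreover have "(\<lambda>N. \<bar>(real N powr \<alpha>)\<^sup>2 / real N - ?\<gamma>\<bar>) \<longlonglongrightarrow> 0"
    using powr_square_over_tendsto[OF assms(1,2)] by (simp add: LIM_zero tendsto_rabs_zero)
  ultimately have "(\<lambda>N. C * (1 / real N powr \<alpha> + \<bar>(real N powr \<alpha>)\<^sup>2 / real N - ?\<gamma>\<bar>)) \<longlonglongrightarrow> 0"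
    using tendsto_mult_right_zero tendsto_add_zero by blast
  then show ?thesis
  proof (rule tendsto_sandwich[OF _ _ tendsto_const, rotated 2])
    show "\<forall>\<^sub>F N in sequentially. 0 \<le> (SUP k\<in>{0..N}.
        \<bar>gen_N \<alpha> lam N (F 0) k - gen_lim \<alpha> lam F (real k / real N powr \<alpha>)\<bar>)"
      by (intro always_eventually allI cSUP_upper2[of _ _ 0]) auto
  qed (rule eventually_mono[OF eventually_ge_at_top[of 1] sup_le])
qed

end
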